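(* Let $n \geq 2$ be a power of 2. Then $\mathsf{QNAADT}(\mathsf{ADDR}_n) = \Theta\big(\mathrm{spar}(\mathsf{ADDR}_n)^{\frac{1}{\log 3}}\big)$.
   Context: $\mathsf{ADDR}_n:\{0,1\}^{\log n+n}\to\{0,1\}$ is $\mathsf{ADDR}_n(x,y)=y_{\mathsf{bin}(x)}$ for $x\in\{0,1\}^{\log n}$, $y\in\{0,1\}^n$, where $\mathsf{bin}(x)\in[n]$ is the integer whose binary representation is $x$. $\mathsf{AND}_S(z)=\prod_{i\in S}z_i$. $\mathrm{spar}(f)$ is the number of nonzero coefficients in the unique expansion $f=\sum_S\widetilde f(S)\mathsf{AND}_S$ with real coefficients. A quantum non-adaptive AND decision tree of cost $c$ for a function on $m$ bits works on $|S_1,\dots,S_c\rangle|b\rangle|w\rangle$ with $S_j\subseteq[m]$, $b\in\{0,1\}^c$, arbitrary workspace; it starts from an input-independent state $|\psi\rangle$, applies once the oracle $O_z$ mapping $|S_1,\dots,S_c\rangle|b_1,\dots,b_c\rangle|w\rangle$ to $|S_1,\dots,S_c\rangle|b_1\oplus\mathsf{AND}_{S_1}(z),\dots,b_c\oplus\mathsf{AND}_{S_c}(z)\rangle|w\rangle$, and accepts with probability $\|\Pi O_z|\psi\rangle\|^2$ for a fixed projector $\Pi$; $\mathsf{QNAADT}(f)$ is the minimum cost of one computing $f$ with success probability at least $2/3$ on every input. Logarithms are base 2. *)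

theory Defs
  imports Complex_Main
begin

(* Inputs on m bits are bool lists of length m; bit i (0-indexed) is z ! i. *)

definition AND :: "nat set \<Rightarrow> bool list \<Rightarrow> bool" where
  "AND S z = (\<forall>i\<in>S. z ! i)"

definition ANDr :: "nat set \<Rightarrow> bool list \<Rightarrow> real" where
  "ANDr S z = (\<Prod>i\<in>S. if z ! i then 1 else 0)"

definition and_coeffs :: "nat \<Rightarrow> (bool list \<Rightarrow> bool) \<Rightarrow> nat set \<Rightarrow> real" where
  "and_coeffs m f = (THE c. (\<forall>S. \<not> S \<subseteq> {..<m} \<longrightarrow> c S = 0) \<and>
      (\<forall>z. length z = m \<longrightarrow> of_bool (f z) = (\<Sum>S\<in>Pow {..<m}. c S * ANDr S z)))"

definition spar :: "nat \<Rightarrow> (bool list \<Rightarrow> bool) \<Rightarrow> nat" where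
  "spar m f = card {S \<in> Pow {..<m}. and_coeffs m f S \<noteq> 0}"

definition bin :: "bool list \<Rightarrow> nat" where
  "bin x = (\<Sum>i<length x. of_bool (x ! i) * 2 ^ (length x - 1 - i))"

(* ADDR_n for n = 2^k, on k + n bits: first k bits are the address x, remaining n bits are y *)
definition ADDR :: "nat \<Rightarrow> bool list \<Rightarrow> bool" where
  "ADDR k z = (drop k z) ! bin (take k z)"

(* computational basis |S_1..S_c>|b_1..b_c>|w> with workspace basis {..<d} *)
definition qbasis :: "nat \<Rightarrow> nat \<Rightarrow> nat \<Rightarrow> (nat set list \<times> bool list \<times> nat) set" where
  "qbasis m c d = {(Ss, bs, w). length Ss = c \<and> (\<forall>S\<in>set Ss. S \<subseteq> {..<m}) \<and> length bs = c \<and> w < d}"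

(* O_z (an involutive permutation of the basis) applied to a state vector *)
definition query_op :: "bool list \<Rightarrow> (nat set list \<times> bool list \<times> nat \<Rightarrow> complex)
    \<Rightarrow> (nat set list \<times> bool list \<times> nat \<Rightarrow> complex)" where
  "query_op z \<psi> = (\<lambda>(Ss, bs, w). \<psi> (Ss, map (\<lambda>(b, S). b \<noteq> AND S z) (zip bs Ss), w))"

definition is_projector :: "'b set \<Rightarrow> ('b \<Rightarrow> 'b \<Rightarrow> complex) \<Rightarrow> bool" where
  "is_projector B P \<longleftrightarrow> (\<forall>x\<in>B. \<forall>y\<in>B. P x y = cnj (P y x)) \<and>
      (\<forall>x\<in>B. \<forall>y\<in>B. (\<Sum>u\<in>B. P x u * P u y) = P x y)"

definition is_state :: "'b set \<Rightarrow> ('b \<Rightarrow> complex) \<Rightarrow> bool" where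
  "is_state B \<psi> \<longleftrightarrow> (\<forall>e. e \<notin> B \<longrightarrow> \<psi> e = 0) \<and> (\<Sum>e\<in>B. (cmod (\<psi> e))\<^sup>2) = 1"

definition proj_norm2 :: "'b set \<Rightarrow> ('b \<Rightarrow> 'b \<Rightarrow> complex) \<Rightarrow> ('b \<Rightarrow> complex) \<Rightarrow> real" where
  "proj_norm2 B P v = (\<Sum>x\<in>B. (cmod (\<Sum>y\<in>B. P x y * v y))\<^sup>2)"

definition qnaadt_computes :: "nat \<Rightarrow> (bool list \<Rightarrow> bool) \<Rightarrow> nat \<Rightarrow> bool" where
  "qnaadt_computes m f c \<longleftrightarrow> (\<exists>d \<psi> P.
     is_state (qbasis m c d) \<psi> \<and> is_projector (qbasis m c d) P \<and>
     (\<forall>z. length z = m \<longrightarrow>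
        (if f z then proj_norm2 (qbasis m c d) P (query_op z \<psi>) \<ge> 2/3
         else proj_norm2 (qbasis m c d) P (query_op z \<psi>) \<le> 1/3)))"

definition QNAADT :: "nat \<Rightarrow> (bool list \<Rightarrow> bool) \<Rightarrow> nat" where
  "QNAADT m f = (LEAST c. qnaadt_computes m f c)"

end

(* Write n = 2^k. Expanding ADDR_k(x, y) = sum over addresses a of y_bin(a) times
   prod_{a_j = 1} x_j * prod_{a_j = 0} (1 - x_j) gives 2^(#zeros of a) distinct monomials per
   address, so spar(ADDR_k) = 3^k and spar^(1/log 3) = n.
   Querying all k + n bits as singletons gives the upper bound k + n <= 2n.
   For the lower bound take, for every address a, the input with all data bits 0 and the one with
   only the addressed data bit set. Their acceptance probabilities differ by 1/3, so the states
   after the oracle are at squared distance >= 1/36; they agree except on query tuples containing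
   a set that separates the two inputs, so the initial state has mass >= 1/144 there. A single
   set separates the pair of at most one address, hence a cost-c tuple at most c pairs, and
   summing over the n addresses gives n/144 <= c. *)

theory Submission
  imports Defs "HOL-Analysis.L2_Norm"
begin

lemma bin_Nil [simp]: "bin [] = 0"
  by (simp add: bin_def)

lemma bin_Cons: "bin (b # xs) = of_bool b * 2 ^ length xs + bin xs"
proof -
  have "bin (b # xs) = (\<Sum>i<Suc (length xs). of_bool ((b # xs) ! i) * 2 ^ (length xs - i))"
    by (simp add: bin_def)
  also have "\<dots> = of_bool b * 2 ^ length xs + bin xs"
    by (subst sum.lessThan_Suc_shift) (simp add: bin_def)
  finally show ?thesis .
qed

lemma bin_less: "bin xs < 2 ^ length xs"
  by (induction xs) (auto simp: bin_Cons)

lemma bin_eq_imp_eq: "length xs = length ys \<Longrightarrow> bin xs = bin ys \<Longrightarrow> xs = ys"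
proof (induction xs ys rule: list_induct2)
  case (Cons x xs y ys)
  have "x = y"
  proof (rule ccontr)
    assume "x \<noteq> y"
    then show False
      using Cons bin_less[of xs] bin_less[of ys] by (cases x; cases y) (auto simp: bin_Cons)
  qed
  with Cons show ?case by (auto simp: bin_Cons)
qed simp

section \<open>Projectors\<close>

definition sq_norm :: "'b set \<Rightarrow> ('b \<Rightarrow> complex) \<Rightarrow> real" where
  "sq_norm B v = (\<Sum>x\<in>B. (cmod (v x))\<^sup>2)"

definition apply_mat :: "'b set \<Rightarrow> ('b \<Rightarrow> 'b \<Rightarrow> complex) \<Rightarrow> ('b \<Rightarrow> complex) \<Rightarrow> 'b \<Rightarrow> complex" where
  "apply_mat B P v x = (\<Sum>y\<in>B. P x y * v y)"

lemma proj_norm2_eq_sq_norm: "proj_norm2 B P v = sq_norm B (apply_mat B P v)"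
  by (simp add: proj_norm2_def sq_norm_def apply_mat_def)

lemma sq_norm_nonneg: "0 \<le> sq_norm B v"
  by (simp add: sq_norm_def sum_nonneg)

lemma sqrt_sq_norm_eq_L2_set: "sqrt (sq_norm B v) = L2_set (\<lambda>x. cmod (v x)) B"
  by (simp add: L2_set_def sq_norm_def)

lemma sqrt_sq_norm_diff_ge:
  "sqrt (sq_norm B u) - sqrt (sq_norm B v) \<le> sqrt (sq_norm B (\<lambda>x. u x - v x))"
proof -
  have "L2_set (\<lambda>x. cmod (u x)) B \<le> L2_set (\<lambda>x. cmod (v x) + cmod (u x - v x)) B"
    by (rule L2_set_mono) (simp_all add: norm_triangle_sub)
  also have "\<dots> \<le> L2_set (\<lambda>x. cmod (v x)) B + L2_set (\<lambda>x. cmod (u x - v x)) B"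
    by (rule L2_set_triangle_ineq)
  finally show ?thesis by (simp add: sqrt_sq_norm_eq_L2_set)
qed

lemma apply_mat_diff: "apply_mat B P (\<lambda>y. u y - v y) = (\<lambda>x. apply_mat B P u x - apply_mat B P v x)"
  by (simp add: apply_mat_def right_diff_distrib sum_subtractf fun_eq_iff)

text \<open>For a projector, \<open>\<parallel>P w\<parallel>\<^sup>2 = \<langle>P w, P w\<rangle> = \<langle>w, P\<^sup>* P w\<rangle> = \<langle>w, P w\<rangle>\<close>.\<close>

lemma projector_sq_norm_apply:
  assumes pr: "is_projector B P"
  shows "complex_of_real (sq_norm B (apply_mat B P w)) = (\<Sum>y\<in>B. cnj (w y) * apply_mat B P w y)"
proof -
  define q where "q = apply_mat B P w"
  have herm: "cnj (P x y) = P y x" if "x \<in> B" "y \<in> B" for x y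
    using pr that unfolding is_projector_def by (metis complex_cnj_cnj)
  have idem: "(\<Sum>u\<in>B. P x u * P u y) = P x y" if "x \<in> B" "y \<in> B" for x y
    using pr that unfolding is_projector_def by blast
  have adjoint: "(\<Sum>x\<in>B. cnj (q x) * P x y) = (\<Sum>y'\<in>B. cnj (w y') * P y' y)" if "y \<in> B" for y
  proof -
    have "(\<Sum>x\<in>B. cnj (q x) * P x y) = (\<Sum>x\<in>B. \<Sum>y'\<in>B. cnj (w y') * (P y' x * P x y))"
      unfolding q_def apply_mat_def cnj_sum sum_distrib_right
      by (intro sum.cong refl) (simp add: herm mult_ac)
    also have "\<dots> = (\<Sum>y'\<in>B. cnj (w y') * (\<Sum>x\<in>B. P y' x * P x y))"
      by (subst sum.swap) (simp add: sum_distrib_left)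
    also have "\<dots> = (\<Sum>y'\<in>B. cnj (w y') * P y' y)"
      using idem that by simp
    finally show ?thesis .
  qed
  have "complex_of_real (sq_norm B q) = (\<Sum>x\<in>B. cnj (q x) * q x)"
    unfolding sq_norm_def of_real_sum by (intro sum.cong refl) (simp only: complex_norm_square mult.commute)
  also have "\<dots> = (\<Sum>y\<in>B. w y * (\<Sum>x\<in>B. cnj (q x) * P x y))"
    unfolding q_def apply_mat_def sum_distrib_left
    by (subst sum.swap) (intro sum.cong refl, simp add: mult_ac q_def apply_mat_def)
  also have "\<dots> = (\<Sum>y\<in>B. w y * (\<Sum>y'\<in>B. cnj (w y') * P y' y))"
    using adjoint by simp
  also have "\<dots> = (\<Sum>y'\<in>B. cnj (w y') * q y')"
    unfolding q_def apply_mat_def sum_distrib_left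
    by (subst sum.swap) (intro sum.cong refl, simp add: mult_ac)
  finally show ?thesis by (simp add: q_def)
qed

lemma proj_norm2_le_sq_norm:
  assumes "is_projector B P"
  shows "proj_norm2 B P w \<le> sq_norm B w"
proof -
  define Q where "Q = sq_norm B (apply_mat B P w)"
  have Q_nonneg: "0 \<le> Q" by (simp add: Q_def sq_norm_nonneg)
  have "Q = cmod (\<Sum>y\<in>B. cnj (w y) * apply_mat B P w y)"
    using projector_sq_norm_apply[OF assms, of w] Q_nonneg
    by (metis Q_def norm_of_real abs_of_nonneg)
  also have "\<dots> \<le> (\<Sum>y\<in>B. \<bar>cmod (w y)\<bar> * \<bar>cmod (apply_mat B P w y)\<bar>)"
    by (rule order_trans[OF norm_sum]) (simp add: norm_mult)
  also have "\<dots> \<le> sqrt (sq_norm B w) * sqrt Q"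
    using L2_set_mult_ineq[where f="\<lambda>y. cmod (w y)" and g="\<lambda>y. cmod (apply_mat B P w y)" and A=B]
    by (simp add: Q_def sqrt_sq_norm_eq_L2_set)
  finally have "sqrt Q * sqrt Q \<le> sqrt (sq_norm B w) * sqrt Q"
    using Q_nonneg by simp
  have "sqrt Q \<le> sqrt (sq_norm B w)"
  proof (cases "Q = 0")
    case True
    then show ?thesis by (simp add: sq_norm_nonneg)
  next
    case False
    with Q_nonneg have "0 < sqrt Q" by simp
    with \<open>sqrt Q * sqrt Q \<le> sqrt (sq_norm B w) * sqrt Q\<close> show ?thesis
      by (rule mult_right_le_imp_le)
  qed
  then show ?thesis by (simp add: Q_def proj_norm2_eq_sq_norm)
qed

text \<open>Acceptance probabilities differing by \<open>1/3\<close> force the two final states apart: with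
  \<open>a = \<parallel>P u\<parallel>\<close>, \<open>b = \<parallel>P v\<parallel>\<close> one has \<open>1/3 \<le> (a - b) (a + b) \<le> 2 \<parallel>P (u - v)\<parallel> \<le> 2 \<parallel>u - v\<parallel>\<close>.\<close>

lemma sq_norm_diff_ge_of_proj_gap:
  assumes pr: "is_projector B P" and u: "sq_norm B u \<le> 1"
    and gap: "proj_norm2 B P v + 1/3 \<le> proj_norm2 B P u"
  shows "1/36 \<le> sq_norm B (\<lambda>x. u x - v x)"
proof -
  define a where "a = sqrt (proj_norm2 B P u)"
  define b where "b = sqrt (proj_norm2 B P v)"
  define dist where "dist = sqrt (proj_norm2 B P (\<lambda>x. u x - v x))"
  have nonneg: "0 \<le> a" "0 \<le> b" "0 \<le> dist"
    by (simp_all add: a_def b_def dist_def proj_norm2_eq_sq_norm sq_norm_nonneg)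
  have diff: "a - b \<le> dist"
    using sqrt_sq_norm_diff_ge[of B "apply_mat B P u" "apply_mat B P v"]
    by (simp add: a_def b_def dist_def proj_norm2_eq_sq_norm apply_mat_diff)
  have "b \<le> a" "a \<le> 1"
    using gap proj_norm2_le_sq_norm[OF pr, of u] u by (simp_all add: a_def b_def)
  have "1/3 \<le> (a - b) * (a + b)"
    using gap by (simp add: a_def b_def algebra_simps proj_norm2_eq_sq_norm sq_norm_nonneg)
  also have "\<dots> \<le> dist * 2"
    using diff \<open>b \<le> a\<close> \<open>a \<le> 1\<close> nonneg by (intro mult_mono) simp_all
  finally have "(1/6)\<^sup>2 \<le> dist\<^sup>2"
    by (intro power_mono) simp_all
  also have "\<dots> \<le> sq_norm B (\<lambda>x. u x - v x)"
    using proj_norm2_le_sq_norm[OF pr] by (simp add: dist_def proj_norm2_eq_sq_norm sq_norm_nonneg)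
  finally show ?thesis by (simp add: power2_eq_square)
qed

section \<open>The AND-query oracle\<close>

definition flip_answers :: "bool list \<Rightarrow> nat set list \<times> bool list \<times> nat \<Rightarrow> nat set list \<times> bool list \<times> nat" where
  "flip_answers z = (\<lambda>(Ss, bs, w). (Ss, map (\<lambda>(b, S). b \<noteq> AND S z) (zip bs Ss), w))"

lemma query_op_eq: "query_op z \<psi> e = \<psi> (flip_answers z e)"
  by (cases e) (simp add: query_op_def flip_answers_def)

lemma fst_flip_answers [simp]: "fst (flip_answers z e) = fst e"
  by (cases e) (simp add: flip_answers_def)

lemma flip_answers_in_qbasis: "e \<in> qbasis m c d \<Longrightarrow> flip_answers z e \<in> qbasis m c d"
  by (cases e) (auto simp: qbasis_def flip_answers_def)

lemma flip_answers_flip_answers: "e \<in> qbasis m c d \<Longrightarrow> flip_answers z (flip_answers z e) = e"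
proof -
  have "length bs = length Ss \<Longrightarrow>
      map2 (\<lambda>b S. b = (\<not> AND S z)) (map2 (\<lambda>b S. b = (\<not> AND S z)) bs Ss) Ss = bs" for bs Ss
    by (induction bs Ss rule: list_induct2) auto
  then show "e \<in> qbasis m c d \<Longrightarrow> flip_answers z (flip_answers z e) = e"
    by (cases e) (auto simp: qbasis_def flip_answers_def)
qed

lemma finite_qbasis: "finite (qbasis m c d)"
proof (rule finite_subset)
  show "qbasis m c d \<subseteq> {Ss. set Ss \<subseteq> Pow {..<m} \<and> length Ss = c} \<times>
      {bs. set bs \<subseteq> UNIV \<and> length bs = c} \<times> {..<d}"
    by (auto simp: qbasis_def)
  show "finite ({Ss. set Ss \<subseteq> Pow {..<m} \<and> length Ss = c} \<times>
      {bs. set bs \<subseteq> (UNIV :: bool set) \<and> length bs = c} \<times> {..<d})"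
    by (intro finite_cartesian_product finite_lists_length_eq) auto
qed

text \<open>\<open>O\<^sub>z\<close> permutes the basis and keeps the queried sets.\<close>

lemma query_op_preserves_mass:
  "(\<Sum>e\<in>{e\<in>qbasis m c d. R (fst e)}. (cmod (query_op z \<psi> e))\<^sup>2) =
   (\<Sum>e\<in>{e\<in>qbasis m c d. R (fst e)}. (cmod (\<psi> e))\<^sup>2)"
  unfolding query_op_eq
  by (rule sum.reindex_bij_witness[where i="flip_answers z" and j="flip_answers z"])
    (auto simp: flip_answers_in_qbasis flip_answers_flip_answers)

lemma sq_norm_query_op: "sq_norm (qbasis m c d) (query_op z \<psi>) = sq_norm (qbasis m c d) \<psi>"
  using query_op_preserves_mass[where R="\<lambda>_. True"] by (simp add: sq_norm_def)

lemma query_op_cong: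
  assumes "\<forall>S\<in>set (fst e). AND S z = AND S z'"
  shows "query_op z \<psi> e = query_op z' \<psi> e"
proof -
  obtain Ss bs w where e: "e = (Ss, bs, w)" by (cases e)
  have answers: "map (\<lambda>(b, S). b \<noteq> AND S z) (zip bs Ss) = map (\<lambda>(b, S). b \<noteq> AND S z') (zip bs Ss)"
    using assms e by (auto dest: set_zip_rightD)
  show ?thesis
    unfolding e query_op_def by (simp only: prod.case answers)
qed

text \<open>Outside the separating query tuples \<open>O\<^sub>z \<psi>\<close> and \<open>O\<^sub>z\<^sub>' \<psi>\<close> coincide, so the squared
  distance \<open>1/36\<close> forced by the acceptance gap lives on those tuples.\<close>

lemma distinguishing_mass_ge:
  assumes st: "is_state (qbasis m c d) \<psi>" and pr: "is_projector (qbasis m c d) P"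
    and gap: "proj_norm2 (qbasis m c d) P (query_op z \<psi>) + 1/3
      \<le> proj_norm2 (qbasis m c d) P (query_op z' \<psi>)"
  shows "1/144 \<le> (\<Sum>e\<in>{e\<in>qbasis m c d. \<exists>S\<in>set (fst e). AND S z \<noteq> AND S z'}. (cmod (\<psi> e))\<^sup>2)"
    (is "_ \<le> (\<Sum>e\<in>?D. _)")
proof -
  define B where "B = qbasis m c d"
  define u where "u = query_op z' \<psi>"
  define v where "v = query_op z \<psi>"
  have "sq_norm B \<psi> = 1"
    using st by (simp add: is_state_def sq_norm_def B_def)
  then have "1/36 \<le> sq_norm B (\<lambda>e. u e - v e)"
    unfolding B_def u_def v_def
    by (intro sq_norm_diff_ge_of_proj_gap[OF pr]) (use gap in \<open>simp_all add: sq_norm_query_op\<close>)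
  also have "\<dots> = (\<Sum>e\<in>?D. (cmod (u e - v e))\<^sup>2)"
    unfolding sq_norm_def B_def
  proof (rule sum.mono_neutral_right[OF finite_qbasis])
    show "\<forall>e\<in>qbasis m c d - ?D. (cmod (u e - v e))\<^sup>2 = 0"
      unfolding u_def v_def using query_op_cong[of _ z' z] by auto
  qed auto
  also have "\<dots> \<le> (\<Sum>e\<in>?D. 2 * (cmod (u e))\<^sup>2 + 2 * (cmod (v e))\<^sup>2)"
  proof (rule sum_mono)
    fix e
    have "(cmod (u e - v e))\<^sup>2 \<le> (cmod (u e) + cmod (v e))\<^sup>2"
      by (intro power_mono norm_triangle_ineq4) simp
    also have "\<dots> \<le> 2 * (cmod (u e))\<^sup>2 + 2 * (cmod (v e))\<^sup>2"
      using sum_squares_bound[of "cmod (u e)" "cmod (v e)"] by (simp add: power2_sum)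
    finally show "(cmod (u e - v e))\<^sup>2 \<le> 2 * (cmod (u e))\<^sup>2 + 2 * (cmod (v e))\<^sup>2" .
  qed
  also have "\<dots> = 2 * (\<Sum>e\<in>?D. (cmod (u e))\<^sup>2) + 2 * (\<Sum>e\<in>?D. (cmod (v e))\<^sup>2)"
    by (simp add: sum.distrib sum_distrib_left)
  also have "\<dots> = 4 * (\<Sum>e\<in>?D. (cmod (\<psi> e))\<^sup>2)"
    unfolding u_def v_def query_op_preserves_mass[where R="\<lambda>Ss. \<exists>S\<in>set Ss. AND S z \<noteq> AND S z'"]
    by simp
  finally show ?thesis by simp
qed

section \<open>Lower bound for ADDR\<close>

lemma sum_filter_le_double_counting:
  fixes w :: "'b \<Rightarrow> real"
  assumes "finite A" "finite B"
    and count: "\<And>e. e \<in> B \<Longrightarrow> card {a\<in>A. R a e} \<le> c" and w: "\<And>e. 0 \<le> w e"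
  shows "(\<Sum>a\<in>A. \<Sum>e\<in>{e\<in>B. R a e}. w e) \<le> real c * (\<Sum>e\<in>B. w e)"
proof -
  have "(\<Sum>a\<in>A. \<Sum>e\<in>{e\<in>B. R a e}. w e) = (\<Sum>e\<in>B. \<Sum>a\<in>A. if R a e then w e else 0)"
    using assms(2) by (simp add: sum.inter_filter sum.swap[of _ A])
  also have "\<dots> = (\<Sum>e\<in>B. real (card {a\<in>A. R a e}) * w e)"
    using assms(1) by (simp add: sum.inter_filter[symmetric])
  also have "\<dots> \<le> (\<Sum>e\<in>B. real c * w e)"
    using count w by (intro sum_mono mult_right_mono) simp_all
  finally show ?thesis
    by (simp add: sum_distrib_left)
qed

definition addr_zero :: "nat \<Rightarrow> bool list \<Rightarrow> bool list" where
  "addr_zero k a = a @ replicate (2 ^ k) False"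

definition addr_one :: "nat \<Rightarrow> bool list \<Rightarrow> bool list" where
  "addr_one k a = (addr_zero k a)[k + bin a := True]"

lemma length_addr_zero: "length (addr_zero k a) = length a + 2 ^ k"
  by (simp add: addr_zero_def)

lemma length_addr_one: "length (addr_one k a) = length a + 2 ^ k"
  by (simp add: addr_one_def length_addr_zero)

lemma nth_addr_zero: "length a = k \<Longrightarrow> i < 2 ^ k \<Longrightarrow> \<not> addr_zero k a ! (k + i)"
  by (simp add: addr_zero_def nth_append)

lemma nth_addr_one:
  "length a = k \<Longrightarrow> addr_one k a ! i = (i = k + bin a \<or> addr_zero k a ! i)"
  using bin_less[of a] by (auto simp: addr_one_def nth_list_update length_addr_zero)

lemma ADDR_addr_zero: "length a = k \<Longrightarrow> \<not> ADDR k (addr_zero k a)"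
  using bin_less[of a] by (simp add: ADDR_def addr_zero_def)

lemma ADDR_addr_one: "length a = k \<Longrightarrow> ADDR k (addr_one k a)"
  using bin_less[of a] by (simp add: ADDR_def addr_one_def addr_zero_def list_update_append)

lemma AND_addr_zero_neq_addr_one:
  assumes "length a = k" and "AND S (addr_zero k a) \<noteq> AND S (addr_one k a)"
  shows "k + bin a \<in> S" and "\<forall>i\<in>S. addr_one k a ! i"
  using assms by (auto simp: AND_def nth_addr_one)

text \<open>A single query set separates at most one hard pair, since it must contain the data
  position of that pair and no other data position.\<close>

lemma AND_addr_zero_neq_addr_one_unique:
  assumes a: "length a = k" and b: "length b = k"
    and "AND S (addr_zero k a) \<noteq> AND S (addr_one k a)"
    and "AND S (addr_zero k b) \<noteq> AND S (addr_one k b)"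
  shows "a = b"
proof (rule bin_eq_imp_eq)
  show "bin a = bin b"
  proof (rule ccontr)
    assume "bin a \<noteq> bin b"
    moreover have "addr_one k a ! (k + bin b)"
      using AND_addr_zero_neq_addr_one[OF a] AND_addr_zero_neq_addr_one(1)[OF b] assms(3,4) by blast
    ultimately show False
      using nth_addr_zero[OF a, of "bin b"] nth_addr_one[OF a] bin_less[of b] b by simp
  qed
qed (simp add: a b)

lemma card_separated_addresses_le:
  "card {a. length a = k \<and> (\<exists>S\<in>set Ss. AND S (addr_zero k a) \<noteq> AND S (addr_one k a))}
    \<le> length Ss"
proof -
  have finite_addresses: "finite {a :: bool list. length a = k}"
    using finite_lists_length_eq[of "UNIV :: bool set" k] by simp
  have "card {a. length a = k \<and> (\<exists>S\<in>set Ss. AND S (addr_zero k a) \<noteq> AND S (addr_one k a))}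
      \<le> (\<Sum>S\<in>set Ss. card {a. length a = k \<and> AND S (addr_zero k a) \<noteq> AND S (addr_one k a)})"
    by (rule order_trans[OF _ card_UN_le])
      (auto intro!: card_mono intro: finite_subset[OF _ finite_addresses])
  also have "\<dots> \<le> (\<Sum>S\<in>set Ss. 1)"
  proof (intro sum_mono)
    fix S
    have "finite {a. length a = k \<and> AND S (addr_zero k a) \<noteq> AND S (addr_one k a)}"
      by (rule finite_subset[OF _ finite_addresses]) auto
    then show "card {a. length a = k \<and> AND S (addr_zero k a) \<noteq> AND S (addr_one k a)} \<le> 1"
      using AND_addr_zero_neq_addr_one_unique[of _ k] by (auto simp: card_le_Suc0_iff_eq)
  qed
  also have "\<dots> \<le> length Ss"
    by (simp add: card_length)
  finally show ?thesis .
qed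

lemma qnaadt_computes_ADDR_lower_bound:
  assumes "qnaadt_computes (k + 2 ^ k) (ADDR k) c"
  shows "2 ^ k \<le> 144 * real c"
proof -
  obtain d \<psi> P where st: "is_state (qbasis (k + 2 ^ k) c d) \<psi>"
    and pr: "is_projector (qbasis (k + 2 ^ k) c d) P"
    and computes: "\<forall>z. length z = k + 2 ^ k \<longrightarrow>
      (if ADDR k z then proj_norm2 (qbasis (k + 2 ^ k) c d) P (query_op z \<psi>) \<ge> 2/3
       else proj_norm2 (qbasis (k + 2 ^ k) c d) P (query_op z \<psi>) \<le> 1/3)"
    using assms unfolding qnaadt_computes_def by blast
  define B where "B = qbasis (k + 2 ^ k) c d"
  define A where "A = {a :: bool list. length a = k}"
  define sep where "sep a Ss \<longleftrightarrow> (\<exists>S\<in>set Ss. AND S (addr_zero k a) \<noteq> AND S (addr_one k a))"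
    for a Ss
  have finite_A: "finite A" and card_A: "card A = 2 ^ k"
    using finite_lists_length_eq[of "UNIV :: bool set" k] card_lists_length_eq[of "UNIV :: bool set" k]
    by (simp_all add: A_def)
  have "1/144 \<le> (\<Sum>e\<in>{e\<in>B. sep a (fst e)}. (cmod (\<psi> e))\<^sup>2)" if "a \<in> A" for a
    unfolding B_def sep_def
  proof (rule distinguishing_mass_ge[OF st pr])
    have a: "length a = k" using that by (simp add: A_def)
    have "proj_norm2 (qbasis (k + 2 ^ k) c d) P (query_op (addr_zero k a) \<psi>) \<le> 1/3"
      using computes[rule_format, of "addr_zero k a"] ADDR_addr_zero[OF a] a
      by (simp add: length_addr_zero)
    moreover have "2/3 \<le> proj_norm2 (qbasis (k + 2 ^ k) c d) P (query_op (addr_one k a) \<psi>)"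
      using computes[rule_format, of "addr_one k a"] ADDR_addr_one[OF a] a
      by (simp add: length_addr_one)
    ultimately show "proj_norm2 (qbasis (k + 2 ^ k) c d) P (query_op (addr_zero k a) \<psi>) + 1/3
        \<le> proj_norm2 (qbasis (k + 2 ^ k) c d) P (query_op (addr_one k a) \<psi>)"
      by linarith
  qed
  then have "real (card A) * (1/144) \<le> (\<Sum>a\<in>A. \<Sum>e\<in>{e\<in>B. sep a (fst e)}. (cmod (\<psi> e))\<^sup>2)"
    using sum_mono[of A "\<lambda>_. 1/144 :: real"] by simp
  also have "\<dots> \<le> real c * (\<Sum>e\<in>B. (cmod (\<psi> e))\<^sup>2)"
  proof (rule sum_filter_le_double_counting[OF finite_A])
    show "finite B" by (simp add: B_def finite_qbasis)
    show "card {a\<in>A. sep a (fst e)} \<le> c" if "e \<in> B" for e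
      using card_separated_addresses_le[of k "fst e"] that
      by (auto simp: A_def sep_def B_def qbasis_def)
  qed simp
  also have "\<dots> = real c"
    using st by (simp add: is_state_def B_def)
  finally show ?thesis using card_A by simp
qed

section \<open>Upper bound by querying every bit\<close>

definition basis_vec :: "'b \<Rightarrow> 'b \<Rightarrow> complex" where
  "basis_vec e x = (if x = e then 1 else 0)"

definition diag_projector :: "('b \<Rightarrow> bool) \<Rightarrow> 'b \<Rightarrow> 'b \<Rightarrow> complex" where
  "diag_projector Q x y = (if x = y \<and> Q x then 1 else 0)"

lemma cmod_basis_vec_sq: "(cmod (basis_vec e x))\<^sup>2 = (if x = e then 1 else 0)"
  by (simp add: basis_vec_def)

lemma is_state_basis_vec: "finite B \<Longrightarrow> e \<in> B \<Longrightarrow> is_state B (basis_vec e)"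
  unfolding is_state_def cmod_basis_vec_sq by (simp add: basis_vec_def)

lemma is_projector_diag_projector:
  assumes "finite B"
  shows "is_projector B (diag_projector Q)"
  unfolding is_projector_def
proof (intro conjI ballI)
  fix x y assume "x \<in> B" "y \<in> B"
  show "diag_projector Q x y = cnj (diag_projector Q y x)"
    by (auto simp: diag_projector_def)
  have "(\<Sum>u\<in>B. diag_projector Q x u * diag_projector Q u y)
      = (\<Sum>u\<in>B. if u = x then diag_projector Q x y else 0)"
    by (intro sum.cong) (auto simp: diag_projector_def)
  then show "(\<Sum>u\<in>B. diag_projector Q x u * diag_projector Q u y) = diag_projector Q x y"
    using assms \<open>x \<in> B\<close> by simp
qed

lemma proj_norm2_diag_projector:
  assumes "finite B"
  shows "proj_norm2 B (diag_projector Q) v = (\<Sum>x\<in>{x\<in>B. Q x}. (cmod (v x))\<^sup>2)"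
proof -
  have "apply_mat B (diag_projector Q) v x = (if Q x then v x else 0)" if "x \<in> B" for x
    using assms that by (simp add: apply_mat_def diag_projector_def if_distrib[of "\<lambda>a. a * _"] cong: if_cong)
  then have "proj_norm2 B (diag_projector Q) v = (\<Sum>x\<in>B. if Q x then (cmod (v x))\<^sup>2 else 0)"
    unfolding proj_norm2_eq_sq_norm sq_norm_def by (intro sum.cong) simp_all
  then show ?thesis
    using assms by (simp add: sum.inter_filter)
qed

lemma query_op_basis_vec:
  assumes "e \<in> qbasis m c d" and "x \<in> qbasis m c d"
  shows "query_op z (basis_vec e) x = basis_vec (flip_answers z e) x"
proof -
  have "flip_answers z x = e \<longleftrightarrow> x = flip_answers z e"
    using assms flip_answers_flip_answers by metis
  then show ?thesis by (simp add: query_op_eq basis_vec_def)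
qed

definition singletons :: "nat \<Rightarrow> nat set list" where
  "singletons m = map (\<lambda>i. {i}) [0..<m]"

lemma flip_answers_singletons:
  assumes "length z = m"
  shows "flip_answers z (singletons m, replicate m False, w) = (singletons m, z, w)"
proof -
  have "map (\<lambda>(b, S). b \<noteq> AND S z) (zip (replicate m False) (singletons m)) = z"
    using assms by (intro nth_equalityI) (auto simp: singletons_def AND_def)
  then show ?thesis by (simp add: flip_answers_def)
qed

text \<open>Query every bit as a singleton: starting from the all-zero answer register, \<open>O\<^sub>z\<close> writes
  \<open>z\<close> itself into it, and the projector onto the answers with \<open>f = 1\<close> accepts with certainty.\<close>

lemma qnaadt_computes_query_all: "qnaadt_computes m f m"
proof -
  define B where "B = qbasis m m 1"
  define e0 where "e0 = (singletons m, replicate m False, 0 :: nat)"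
  define Q where "Q e \<longleftrightarrow> f (fst (snd e))" for e :: "nat set list \<times> bool list \<times> nat"
  have fin: "finite B" by (simp add: B_def finite_qbasis)
  have e0_in: "e0 \<in> B" by (auto simp: B_def qbasis_def e0_def singletons_def)
  have "proj_norm2 B (diag_projector Q) (query_op z (basis_vec e0)) = of_bool (f z)"
    if z: "length z = m" for z
  proof -
    define ez where "ez = (singletons m, z, 0 :: nat)"
    have "ez \<in> B" using z by (auto simp: B_def qbasis_def ez_def singletons_def)
    have "proj_norm2 B (diag_projector Q) (query_op z (basis_vec e0))
        = (\<Sum>x\<in>{x\<in>B. Q x}. (cmod (query_op z (basis_vec e0) x))\<^sup>2)"
      by (rule proj_norm2_diag_projector[OF fin])
    also have "\<dots> = (\<Sum>x\<in>{x\<in>B. Q x}. (cmod (basis_vec ez x))\<^sup>2)"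
      using e0_in z unfolding B_def
      by (intro sum.cong refl) (simp add: query_op_basis_vec flip_answers_singletons e0_def ez_def)
    also have "\<dots> = of_bool (f z)"
      using \<open>ez \<in> B\<close> fin by (simp add: cmod_basis_vec_sq Q_def ez_def)
    finally show ?thesis .
  qed
  then show ?thesis
    unfolding qnaadt_computes_def
    using is_state_basis_vec[OF fin e0_in] is_projector_diag_projector[OF fin]
    by (intro exI[of _ 1] exI[of _ "basis_vec e0"] exI[of _ "diag_projector Q"]) (simp add: B_def)
qed

lemma qnaadt_computes_QNAADT: "qnaadt_computes m f (QNAADT m f)"
  unfolding QNAADT_def using qnaadt_computes_query_all by (rule LeastI)

lemma QNAADT_le: "QNAADT m f \<le> m"
  unfolding QNAADT_def using qnaadt_computes_query_all by (rule Least_le)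

section \<open>AND-sparsity of ADDR\<close>

lemma ANDr_indicator:
  assumes "T \<subseteq> {..<m}"
  shows "ANDr T (map (\<lambda>i. i \<in> S) [0..<m]) = of_bool (T \<subseteq> S)"
proof -
  have "finite T" using assms finite_subset by blast
  have "ANDr T (map (\<lambda>i. i \<in> S) [0..<m]) = (\<Prod>i\<in>T. of_bool (i \<in> S))"
    unfolding ANDr_def using assms by (intro prod.cong) auto
  also have "\<dots> = of_bool (T \<subseteq> S)"
    using \<open>finite T\<close> by (auto simp: prod_zero_iff intro!: prod.neutral)
  finally show ?thesis .
qed

text \<open>Evaluating at the indicator vector of \<open>S\<close> isolates \<open>c S\<close> once all proper subsets of \<open>S\<close>
  are known to have coefficient \<open>0\<close>.\<close>

lemma AND_expansion_eq_zero_imp_coeff_zero: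
  assumes out: "\<forall>S. \<not> S \<subseteq> {..<m} \<longrightarrow> c S = 0"
    and zero: "\<forall>z. length z = m \<longrightarrow> (\<Sum>S\<in>Pow {..<m}. c S * ANDr S z) = 0"
  shows "c S = 0"
proof (induction "card S" arbitrary: S rule: less_induct)
  case less
  show ?case
  proof (cases "S \<subseteq> {..<m}")
    case False
    then show ?thesis using out by blast
  next
    case True
    then have "finite S" using finite_subset by blast
    have "0 = (\<Sum>T\<in>Pow {..<m}. c T * ANDr T (map (\<lambda>i. i \<in> S) [0..<m]))"
      using zero by simp
    also have "\<dots> = (\<Sum>T\<in>Pow S. c T)"
      using True by (simp add: ANDr_indicator sum.inter_filter[symmetric])
        (intro sum.cong, auto)
    also have "\<dots> = c S + (\<Sum>T\<in>Pow S - {S}. c T)"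
      using \<open>finite S\<close> by (subst sum.remove[of _ S]) auto
    also have "(\<Sum>T\<in>Pow S - {S}. c T) = 0"
      using \<open>finite S\<close> by (intro sum.neutral ballI less) (auto intro: psubset_card_mono)
    finally show ?thesis by simp
  qed
qed

lemma and_coeffs_eqI:
  assumes out: "\<forall>S. \<not> S \<subseteq> {..<m} \<longrightarrow> c S = 0"
    and expansion: "\<forall>z. length z = m \<longrightarrow> of_bool (f z) = (\<Sum>S\<in>Pow {..<m}. c S * ANDr S z)"
  shows "and_coeffs m f = c"
  unfolding and_coeffs_def
proof (rule the_equality)
  fix c' assume c': "(\<forall>S. \<not> S \<subseteq> {..<m} \<longrightarrow> c' S = 0) \<and>
    (\<forall>z. length z = m \<longrightarrow> of_bool (f z) = (\<Sum>S\<in>Pow {..<m}. c' S * ANDr S z))"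
  have "c' S - c S = 0" for S
    using c' out expansion
    by (intro AND_expansion_eq_zero_imp_coeff_zero[of m "\<lambda>S. c' S - c S"])
      (simp_all add: left_diff_distrib sum_subtractf)
  then show "c' = c" by auto
qed (use assms in blast)

definition ones :: "bool list \<Rightarrow> nat set" where
  "ones a = {j. j < length a \<and> a ! j}"

definition zeros :: "bool list \<Rightarrow> nat set" where
  "zeros a = {j. j < length a \<and> \<not> a ! j}"

text \<open>\<open>ADDR\<^sub>k(x, y) = \<Sum>\<^sub>a y\<^bsub>bin a\<^esub> \<cdot> \<Prod>{x\<^sub>j | j \<in> ones a} \<cdot> \<Prod>{1 - x\<^sub>j | j \<in> zeros a}\<close>; expanding the
  last product gives one monomial \<open>ADDR_monomial k (a, T)\<close> for every \<open>T \<subseteq> zeros a\<close>, with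
  coefficient \<open>(-1)\<^bsup>|T|\<^esup>\<close>, and these monomials are pairwise distinct.\<close>

definition ADDR_index :: "nat \<Rightarrow> (bool list \<times> nat set) set" where
  "ADDR_index k = Sigma {a. length a = k} (\<lambda>a. Pow (zeros a))"

definition ADDR_monomial :: "nat \<Rightarrow> bool list \<times> nat set \<Rightarrow> nat set" where
  "ADDR_monomial k i = insert (k + bin (fst i)) (ones (fst i) \<union> snd i)"

definition ADDR_coeff :: "nat \<Rightarrow> nat set \<Rightarrow> real" where
  "ADDR_coeff k S = (\<Sum>i\<in>ADDR_index k. if S = ADDR_monomial k i then (-1) ^ card (snd i) else 0)"

lemma finite_ones: "finite (ones a)"
  by (simp add: ones_def)

lemma finite_zeros: "finite (zeros a)"
  by (simp add: zeros_def)

lemma finite_ADDR_index: "finite (ADDR_index k)"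
  using finite_lists_length_eq[of "UNIV :: bool set" k]
  by (auto simp: ADDR_index_def finite_zeros intro: finite_SigmaI)

lemma ADDR_monomial_subset: "i \<in> ADDR_index k \<Longrightarrow> ADDR_monomial k i \<subseteq> {..<k + 2 ^ k}"
  using bin_less[of "fst i"] by (auto simp: ADDR_monomial_def ADDR_index_def ones_def zeros_def)

lemma ANDr_ones_prod_zeros:
  assumes a: "length a = k" and z: "k \<le> length z"
  shows "ANDr (ones a) z * (\<Prod>j\<in>zeros a. 1 - (if z ! j then 1 else 0)) = of_bool (take k z = a)"
proof -
  define agree where "agree j = (if z ! j = a ! j then 1 else (0::real))" for j
  have split: "{..<k} = ones a \<union> zeros a" "ones a \<inter> zeros a = {}"
    using a by (auto simp: ones_def zeros_def)
  have "ANDr (ones a) z = (\<Prod>j\<in>ones a. agree j)"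
    unfolding ANDr_def by (rule prod.cong) (auto simp: agree_def ones_def)
  moreover have "(\<Prod>j\<in>zeros a. 1 - (if z ! j then 1 else 0)) = (\<Prod>j\<in>zeros a. agree j)"
    by (rule prod.cong) (auto simp: agree_def zeros_def)
  ultimately have "ANDr (ones a) z * (\<Prod>j\<in>zeros a. 1 - (if z ! j then 1 else 0)) = (\<Prod>j<k. agree j)"
    by (simp add: split prod.union_disjoint finite_ones finite_zeros)
  also have "\<dots> = of_bool (\<forall>j<k. z ! j = a ! j)"
    by (auto simp: agree_def intro!: prod.neutral)
  also have "(\<forall>j<k. z ! j = a ! j) \<longleftrightarrow> take k z = a"
    using a z by (auto simp: list_eq_iff_nth_eq)
  finally show ?thesis .
qed

lemma ANDr_ADDR_monomial:
  assumes "i \<in> ADDR_index k"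
  shows "ANDr (ADDR_monomial k i) z
    = (if z ! (k + bin (fst i)) then 1 else 0) * (ANDr (ones (fst i)) z * ANDr (snd i) z)"
proof -
  obtain a T where i: "i = (a, T)" by (cases i)
  have "length a = k" "T \<subseteq> zeros a" using assms i by (auto simp: ADDR_index_def)
  then have "k + bin a \<notin> ones a \<union> T" "ones a \<inter> T = {}" "finite T"
    using finite_subset[OF _ finite_zeros] by (auto simp: ones_def zeros_def)
  then show ?thesis
    unfolding i ADDR_monomial_def ANDr_def by (simp add: finite_ones prod.union_disjoint)
qed

lemma ADDR_AND_expansion:
  assumes z: "length z = k + 2 ^ k"
  shows "of_bool (ADDR k z) = (\<Sum>S\<in>Pow {..<k + 2 ^ k}. ADDR_coeff k S * ANDr S z)"
proof -
  define zr where "zr j = (if z ! j then 1 else 0 :: real)" for j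
  have "(\<Sum>S\<in>Pow {..<k + 2 ^ k}. ADDR_coeff k S * ANDr S z)
      = (\<Sum>i\<in>ADDR_index k. \<Sum>S\<in>Pow {..<k + 2 ^ k}.
          if S = ADDR_monomial k i then (-1) ^ card (snd i) * ANDr S z else 0)"
    unfolding ADDR_coeff_def sum_distrib_right by (subst sum.swap) (intro sum.cong refl, auto)
  also have "\<dots> = (\<Sum>i\<in>ADDR_index k. (-1) ^ card (snd i) * ANDr (ADDR_monomial k i) z)"
    by (intro sum.cong refl) (simp add: ADDR_monomial_subset)
  also have "\<dots> = (\<Sum>a | length a = k. \<Sum>T\<in>Pow (zeros a).
      zr (k + bin a) * ANDr (ones a) z * ((-1) ^ card T * ANDr T z))"
    unfolding ADDR_index_def
    using finite_lists_length_eq[of "UNIV :: bool set" k]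
    by (subst sum.Sigma) (auto simp: finite_zeros ANDr_ADDR_monomial[unfolded ADDR_index_def] zr_def
        intro!: sum.cong)
  also have "\<dots> = (\<Sum>a | length a = k. zr (k + bin a) * (ANDr (ones a) z * (\<Prod>j\<in>zeros a. 1 - zr j)))"
  proof (intro sum.cong refl)
    fix a
    have "(\<Prod>j\<in>zeros a. 1 - zr j) = (\<Sum>T\<in>Pow (zeros a). (-1) ^ card T * ANDr T z)"
      by (simp add: prod_diff_conv_sum[OF finite_zeros] ANDr_def zr_def)
    then show "(\<Sum>T\<in>Pow (zeros a). zr (k + bin a) * ANDr (ones a) z * ((-1) ^ card T * ANDr T z)) =
        zr (k + bin a) * (ANDr (ones a) z * (\<Prod>j\<in>zeros a. 1 - zr j))"
      by (simp add: sum_distrib_left mult_ac)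
  qed
  also have "\<dots> = (\<Sum>a | length a = k. if take k z = a then zr (k + bin (take k z)) else 0)"
  proof (intro sum.cong refl)
    fix a :: "bool list" assume "a \<in> {a. length a = k}"
    then show "zr (k + bin a) * (ANDr (ones a) z * (\<Prod>j\<in>zeros a. 1 - zr j))
        = (if take k z = a then zr (k + bin (take k z)) else 0)"
      using ANDr_ones_prod_zeros[of a k z] z unfolding zr_def by auto
  qed
  also have "\<dots> = of_bool (ADDR k z)"
    using z finite_lists_length_eq[of "UNIV :: bool set" k] by (simp add: zr_def ADDR_def)
  finally show ?thesis ..
qed

lemma ADDR_monomial_parts:
  assumes "i \<in> ADDR_index k"
  shows "{x \<in> ADDR_monomial k i. k \<le> x} = {k + bin (fst i)}"
    and "{x \<in> ADDR_monomial k i. x < k} = ones (fst i) \<union> snd i"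
proof -
  have "length (fst i) = k" "snd i \<subseteq> zeros (fst i)"
    using assms by (auto simp: ADDR_index_def)
  then show "{x \<in> ADDR_monomial k i. k \<le> x} = {k + bin (fst i)}"
    and "{x \<in> ADDR_monomial k i. x < k} = ones (fst i) \<union> snd i"
    by (auto simp: ADDR_monomial_def ones_def zeros_def)
qed

lemma ones_Int_zeros: "ones a \<inter> zeros a = {}"
  by (auto simp: ones_def zeros_def)

lemma inj_on_ADDR_monomial: "inj_on (ADDR_monomial k) (ADDR_index k)"
proof (rule inj_onI)
  fix i j assume i: "i \<in> ADDR_index k" and j: "j \<in> ADDR_index k"
    and eq: "ADDR_monomial k i = ADDR_monomial k j"
  have "{k + bin (fst i)} = {x \<in> ADDR_monomial k i. k \<le> x}"
    using ADDR_monomial_parts(1)[OF i] by (rule sym)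
  also have "\<dots> = {k + bin (fst j)}"
    unfolding eq by (rule ADDR_monomial_parts(1)[OF j])
  moreover have "length (fst i) = k" "length (fst j) = k"
    using i j by (auto simp: ADDR_index_def)
  ultimately have fst_eq: "fst i = fst j"
    by (intro bin_eq_imp_eq) simp_all
  have "ones (fst j) \<union> snd i = {x \<in> ADDR_monomial k i. x < k}"
    using ADDR_monomial_parts(2)[OF i, unfolded fst_eq] by (rule sym)
  also have "\<dots> = ones (fst j) \<union> snd j"
    unfolding eq by (rule ADDR_monomial_parts(2)[OF j])
  moreover have "snd i \<subseteq> zeros (fst i)" "snd j \<subseteq> zeros (fst j)"
    using i j by (auto simp: ADDR_index_def)
  ultimately have "snd i = snd j"
    using ones_Int_zeros[of "fst j"] unfolding fst_eq by blast
  with fst_eq show "i = j"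
    by (simp add: prod_eq_iff)
qed

lemma ADDR_coeff_monomial:
  assumes "i \<in> ADDR_index k"
  shows "ADDR_coeff k (ADDR_monomial k i) = (-1) ^ card (snd i)"
proof -
  have "ADDR_coeff k (ADDR_monomial k i) = (\<Sum>j\<in>ADDR_index k. if j = i then (-1) ^ card (snd j) else 0)"
    unfolding ADDR_coeff_def using inj_on_ADDR_monomial[of k] assms
    by (intro sum.cong refl) (auto dest: inj_onD)
  then show ?thesis
    using assms finite_ADDR_index by simp
qed

lemma ADDR_coeff_eq_zero: "S \<notin> ADDR_monomial k ` ADDR_index k \<Longrightarrow> ADDR_coeff k S = 0"
  unfolding ADDR_coeff_def by (intro sum.neutral) auto

lemma and_coeffs_ADDR: "and_coeffs (k + 2 ^ k) (ADDR k) = ADDR_coeff k"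
proof (rule and_coeffs_eqI)
  show "\<forall>S. \<not> S \<subseteq> {..<k + 2 ^ k} \<longrightarrow> ADDR_coeff k S = 0"
  proof (intro allI impI ADDR_coeff_eq_zero)
    fix S assume "\<not> S \<subseteq> {..<k + 2 ^ k}"
    then show "S \<notin> ADDR_monomial k ` ADDR_index k"
      using ADDR_monomial_subset by blast
  qed
qed (simp add: ADDR_AND_expansion)

lemma card_zeros_Cons: "card (zeros (b # a)) = (if b then card (zeros a) else Suc (card (zeros a)))"
proof -
  have "zeros (b # a) = (if b then Suc ` zeros a else insert 0 (Suc ` zeros a))"
    by (auto simp: zeros_def image_iff less_Suc_eq_0_disj)
  then show ?thesis
    by (simp add: card_image finite_zeros)
qed

text \<open>Each address bit is either \<open>1\<close>, or \<open>0\<close> and inside or outside \<open>T\<close>.\<close>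

lemma sum_pow2_card_zeros: "(\<Sum>a | length a = k. (2::nat) ^ card (zeros a)) = 3 ^ k"
proof (induction k)
  case 0
  then show ?case by (simp add: zeros_def)
next
  case (Suc k)
  have lists: "{a :: bool list. length a = Suc k} = (\<lambda>(a, b). b # a) ` ({a. length a = k} \<times> UNIV)"
    using lists_length_Suc_eq[of "UNIV :: bool set" k] by simp
  have "(\<Sum>a | length a = Suc k. (2::nat) ^ card (zeros a))
      = (\<Sum>(a, b)\<in>{a. length a = k} \<times> UNIV. 2 ^ card (zeros (b # a)))"
    unfolding lists by (subst sum.reindex) (auto simp: inj_split_Cons case_prod_beta)
  also have "\<dots> = (\<Sum>a | length a = k. \<Sum>b\<in>UNIV. 2 ^ card (zeros (b # a)))"
    by (simp add: sum.cartesian_product)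
  also have "\<dots> = (\<Sum>a | length a = k. 3 * 2 ^ card (zeros a))"
    by (simp add: UNIV_bool card_zeros_Cons)
  finally show ?case
    using Suc by (simp add: sum_distrib_left[symmetric])
qed

lemma spar_ADDR: "spar (k + 2 ^ k) (ADDR k) = 3 ^ k"
proof -
  have "{S \<in> Pow {..<k + 2 ^ k}. and_coeffs (k + 2 ^ k) (ADDR k) S \<noteq> 0}
      = ADDR_monomial k ` ADDR_index k"
    unfolding and_coeffs_ADDR using ADDR_monomial_subset ADDR_coeff_monomial ADDR_coeff_eq_zero
    by fastforce
  then have "spar (k + 2 ^ k) (ADDR k) = card (ADDR_index k)"
    unfolding spar_def using inj_on_ADDR_monomial by (simp add: card_image)
  also have "\<dots> = (\<Sum>a | length a = k. 2 ^ card (zeros a))"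
    unfolding ADDR_index_def using finite_lists_length_eq[of "UNIV :: bool set" k]
    by (simp add: card_Pow finite_zeros)
  finally show ?thesis
    using sum_pow2_card_zeros by simp
qed

lemma pow3_powr_inverse_log2_3: "real (3 ^ k) powr (1 / log 2 3) = 2 ^ k"
proof -
  have "real (3 ^ k) powr (1 / log 2 3) = 3 powr (real k / log 2 3)"
    by (simp add: powr_realpow[symmetric] powr_powr)
  also have "\<dots> = (2 powr log 2 3) powr (real k / log 2 3)"
    by (subst powr_log_cancel) simp_all
  also have "\<dots> = 2 powr real k"
  proof -
    have "0 < log 2 (3::real)" by simp
    then have "log 2 (3::real) \<noteq> 0" by linarith
    then show ?thesis by (simp only: powr_powr) simp
  qed
  also have "\<dots> = 2 ^ k"
    by (simp add: powr_realpow)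
  finally show ?thesis .
qed

theorem claimA1:
  shows "\<exists>c1>0. \<exists>c2>0. \<forall>k::nat. k \<ge> 1 \<longrightarrow>
    c1 * real (spar (k + 2^k) (ADDR k)) powr (1 / log 2 3) \<le> real (QNAADT (k + 2^k) (ADDR k)) \<and>
    real (QNAADT (k + 2^k) (ADDR k)) \<le> c2 * real (spar (k + 2^k) (ADDR k)) powr (1 / log 2 3)"
proof (rule exI[of _ "1/144"], intro conjI exI[of _ 2] allI impI)
  fix k :: nat
  have sparsity: "real (spar (k + 2^k) (ADDR k)) powr (1 / log 2 3) = 2 ^ k"
    by (simp only: spar_ADDR pow3_powr_inverse_log2_3)
  show "1/144 * real (spar (k + 2^k) (ADDR k)) powr (1 / log 2 3) \<le> real (QNAADT (k + 2^k) (ADDR k))"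
    using qnaadt_computes_ADDR_lower_bound[OF qnaadt_computes_QNAADT, of k] by (simp add: sparsity)
  have "real (QNAADT (k + 2^k) (ADDR k)) \<le> real (k + 2 ^ k)"
    using QNAADT_le by (simp only: of_nat_le_iff)
  also have "\<dots> \<le> 2 * 2 ^ k"
    using less_exp[of k] by (simp add: of_nat_less_two_power less_imp_le)
  finally show "real (QNAADT (k + 2^k) (ADDR k)) \<le> 2 * real (spar (k + 2^k) (ADDR k)) powr (1 / log 2 3)"
    by (simp add: sparsity)
qed simp_all

end
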